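(* Let $(M,\circ,\mathrm{OR})$ be a free $\mathbb{D}$-module of rank 3 with scalar product and orientation, and let $x,y,z\in M\setminus\epsilon M$ satisfy $x+y+z=0$. Then $$\alpha_{xy}+\alpha_{yz}+\alpha_{zx}=\pi.$$
   Context: $\mathbb{D}=\{a+\epsilon b: a,b\in\mathbb{R}\}$, $\epsilon^2=0$, $\mathfrak{Re}(a+\epsilon b)=a$; real-analytic functions are extended by $f(a+\epsilon b)=f(a)+\epsilon bf'(a)$. Scalar product: symmetric $\mathbb{D}$-bilinear $\circ:M\times M\to\mathbb{D}$ with $\mathfrak{Re}(x\circ x)\ge0$, equality iff $x\in\epsilon M$; orientation: one of the two classes of ordered bases under $\{b'_j=A_{jk}b_k\}\sim\{b_k\}$ iff $\det\mathfrak{Re}(A)>0$. For $x\notin\epsilon M$, $|x|:=\sqrt{x\circ x}$ (positive real part). For $x,y\in M\setminus\epsilon M$ the dual angle $\Theta_{xy}$ is the unique dual number in $\{0\}\cup((0,\pi)+\epsilon\mathbb{R})\cup\{\pi\}$ with $\cos\Theta_{xy}=\frac{x\circ y}{|x|\,|y|}$, and $\alpha_{xy}:=\pi-\Theta_{xy}$. *)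

theory Defs
  imports "HOL-Analysis.Analysis"
begin

text \<open>A dual number a + eps b is represented as Dual a b; re is the real part.\<close>
datatype dual = Dual (re: real) (du: real)

lemma dual_eq_iff: "x = y \<longleftrightarrow> re x = re y \<and> du x = du y"
  by (cases x; cases y) auto

instantiation dual :: comm_ring_1
begin
definition "0 = Dual 0 0"
definition "1 = Dual 1 0"
definition "x + y = Dual (re x + re y) (du x + du y)"
definition "x - y = Dual (re x - re y) (du x - du y)"
definition "- x = Dual (- re x) (- du x)"
definition "x * y = Dual (re x * re y) (re x * du y + du x * re y)"
instance
  by intro_classes
     (auto simp: dual_eq_iff zero_dual_def one_dual_def plus_dual_def minus_dual_def
        uminus_dual_def times_dual_def algebra_simps)
end

text \<open>Inverse / division (meaningful when the real part is nonzero).\<close>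
instantiation dual :: inverse
begin
definition "inverse x = Dual (1 / re x) (- du x / (re x)\<^sup>2)"
definition "divide x y = x * inverse (y::dual)"
instance ..
end

definition eps :: dual where "eps = Dual 0 1"

definition dual_ext :: "(real \<Rightarrow> real) \<Rightarrow> dual \<Rightarrow> dual" where
  "dual_ext f x = Dual (f (re x)) (du x * deriv f (re x))"

section \<open>Free D-module of rank 3 (coordinates w.r.t. a basis) with scalar product\<close>

definition eps_part :: "(dual^3) set" where
  "eps_part = range (\<lambda>v. eps *s v)"

definition is_scalar_product :: "(dual^3 \<Rightarrow> dual^3 \<Rightarrow> dual) \<Rightarrow> bool" where
  "is_scalar_product sp \<longleftrightarrow>
     (\<forall>x y. sp x y = sp y x) \<and>
     (\<forall>x y z. sp (x + y) z = sp x z + sp y z) \<and>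
     (\<forall>c x y. sp (c *s x) y = c * sp x y) \<and>
     (\<forall>x. re (sp x x) \<ge> 0) \<and>
     (\<forall>x. re (sp x x) = 0 \<longleftrightarrow> x \<in> eps_part)"

definition dnorm :: "(dual^3 \<Rightarrow> dual^3 \<Rightarrow> dual) \<Rightarrow> dual^3 \<Rightarrow> dual" where
  "dnorm sp x = dual_ext sqrt (sp x x)"

definition angle_range :: "dual set" where
  "angle_range = {0} \<union> {t. 0 < re t \<and> re t < pi} \<union> {Dual pi 0}"

definition dual_angle :: "(dual^3 \<Rightarrow> dual^3 \<Rightarrow> dual) \<Rightarrow> dual^3 \<Rightarrow> dual^3 \<Rightarrow> dual" where
  "dual_angle sp x y =
     (THE t. t \<in> angle_range \<and> dual_ext cos t = sp x y / (dnorm sp x * dnorm sp y))"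

definition alpha :: "(dual^3 \<Rightarrow> dual^3 \<Rightarrow> dual) \<Rightarrow> dual^3 \<Rightarrow> dual^3 \<Rightarrow> dual" where
  "alpha sp x y = Dual pi 0 - dual_angle sp x y"

end

(* Write a, b, c for the dual angles Theta_xy, Theta_yz, Theta_zx. Since z = - x - y, the Gram
   determinant G = (x o x)(y o y) - (x o y)^2 is the same for all three pairs, and for each pair
   sin Theta |u| |v| is the dual square root of G (zero in the degenerate case G = 0), while
   cos Theta |u| |v| = u o v. Multiplying the addition formulas by |x| |y|^2 |z| then gives
   cos (a + b) = cos c and sin (a + b) = - sin c, hence cos (a + b + c) = 1 and
   sin (a + b + c) = 0. The real parts of a, b, c lie in [0, pi] and cannot all vanish, because the
   three inner products add up to -(|x|^2 + |y|^2 + |z|^2)/2; so a + b + c = 2 pi exactly, and the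
   exterior angles alpha = pi - Theta add up to pi. *)

theory Submission
  imports Defs
begin

lemma dual_components [simp]:
  "re (x + y) = re x + re y"  "du (x + y) = du x + du y"
  "re (x - y) = re x - re y"  "du (x - y) = du x - du y"
  "re (- x) = - re x"  "du (- x) = - du x"
  "re (x * y) = re x * re y"  "du (x * y) = re x * du y + du x * re y"
  "re 0 = 0"  "du 0 = 0"  "re 1 = 1"  "du 1 = 0"
  "re (inverse x) = 1 / re x"  "du (inverse x) = - du x / (re x)\<^sup>2"
  "re (dual_ext f x) = f (re x)"  "du (dual_ext f x) = du x * deriv f (re x)"
  by (simp_all add: plus_dual_def minus_dual_def uminus_dual_def times_dual_def
      zero_dual_def one_dual_def inverse_dual_def dual_ext_def)

lemma dual_numeral [simp]: "re (numeral n) = numeral n" "du (numeral n) = 0"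
  by (induction n) (simp_all only: numeral.simps dual_components)

lemma dual_mult_right_cancel: "re m \<noteq> 0 \<Longrightarrow> a * m = b * m \<longleftrightarrow> a = b"
  by (auto simp: dual_eq_iff)

lemma dual_divide_mult_cancel: "re n \<noteq> 0 \<Longrightarrow> c / n * n = c"
  by (simp add: divide_dual_def dual_eq_iff field_simps power2_eq_square)

lemma dual_square_eq_1: "(c::dual) * c = 1 \<Longrightarrow> c = 1 \<or> c = - 1"
proof -
  assume "c * c = 1"
  then have "re c * re c = 1" and "2 * re c * du c = 0"
    by (auto simp: dual_eq_iff algebra_simps)
  then have "re c = 1 \<or> re c = -1" and "du c = 0"
    by (auto simp: square_eq_1_iff)
  then show ?thesis
    by (auto simp: dual_eq_iff)
qed

lemma deriv_cos [simp]: "deriv cos t = - sin t"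
  by (rule DERIV_imp_deriv) (rule DERIV_cos)

lemma deriv_sin [simp]: "deriv sin t = cos t"
  by (rule DERIV_imp_deriv) (rule DERIV_sin)

lemma dual_cos_add:
  "dual_ext cos (s + t) = dual_ext cos s * dual_ext cos t - dual_ext sin s * dual_ext sin t"
  by (simp add: dual_eq_iff cos_add sin_add algebra_simps)

lemma dual_sin_add:
  "dual_ext sin (s + t) = dual_ext sin s * dual_ext cos t + dual_ext cos s * dual_ext sin t"
  by (simp add: dual_eq_iff cos_add sin_add algebra_simps)

lemma dual_sin_cos_squared_add: "dual_ext sin t * dual_ext sin t + dual_ext cos t * dual_ext cos t = 1"
  using sin_cos_squared_add[of "re t"] by (simp add: dual_eq_iff power2_eq_square algebra_simps)

lemma dual_eq_2pi_if_cos_sin: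
  assumes "dual_ext cos s = 1" "dual_ext sin s = 0" "0 < re s" "re s < 4 * pi"
  shows "s = Dual (2 * pi) 0"
proof -
  have cos: "cos (re s) = 1" and "du s * cos (re s) = 0"
    using assms(1,2) by (auto simp: dual_eq_iff)
  then have "du s = 0"
    by simp
  obtain n :: int where n: "re s = n * 2 * pi"
    using cos by (auto simp: cos_one_2pi_int)
  moreover have "n = 1"
    using assms(3,4) n by (simp add: mult_less_cancel_right zero_less_mult_iff)
  ultimately show ?thesis
    using \<open>du s = 0\<close> by (simp add: dual_eq_iff)
qed

lemma deriv_sqrt: "0 < t \<Longrightarrow> deriv sqrt t = inverse (sqrt t) / 2"
  by (intro DERIV_imp_deriv DERIV_real_sqrt)

lemma dual_sqrt_mult_self: "0 < re a \<Longrightarrow> dual_ext sqrt a * dual_ext sqrt a = a"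
  by (simp add: dual_eq_iff deriv_sqrt field_simps)

lemma dual_sqrt_square:
  \<comment> \<open>for a = 0 the junk value deriv sqrt 0 is multiplied by du 0 = 0\<close>
  assumes "0 < re a \<or> a = 0"
  shows "dual_ext sqrt (a * a) = a"
  using assms by (auto simp: dual_eq_iff deriv_sqrt field_simps)

lemma angle_range_cases:
  assumes "t \<in> angle_range"
  obtains "t = 0" | "t = Dual pi 0" | "0 < re t" "re t < pi"
  using assms by (auto simp: angle_range_def)

lemma angle_range_re_bounds: "t \<in> angle_range \<Longrightarrow> 0 \<le> re t \<and> re t \<le> pi"
  by (elim angle_range_cases) auto

lemma dual_sin_pos_or_0_angle_range: "t \<in> angle_range \<Longrightarrow> 0 < re (dual_ext sin t) \<or> dual_ext sin t = 0"
  by (elim angle_range_cases) (auto simp: dual_eq_iff sin_gt_zero)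

lemma inj_on_dual_cos_angle_range: "inj_on (dual_ext cos) angle_range"
proof
  fix s t
  assume s: "s \<in> angle_range" and t: "t \<in> angle_range"
    and cos: "dual_ext cos s = dual_ext cos t"
  from cos have cos_re: "cos (re s) = cos (re t)" and du: "du s * sin (re s) = du t * sin (re t)"
    unfolding dual_eq_iff by simp_all
  have re: "re s = re t"
    using angle_range_re_bounds[OF s] angle_range_re_bounds[OF t] cos_re cos_inj_pi by blast
  from s show "s = t"
  proof (cases rule: angle_range_cases)
    case 1
    with t re show ?thesis
      by (cases rule: angle_range_cases) (auto simp: dual_eq_iff)
  next
    case 2
    with t re show ?thesis
      by (cases rule: angle_range_cases) (auto simp: dual_eq_iff)
  next
    case 3
    then show ?thesis
      using du re sin_gt_zero[of "re s"] by (simp add: dual_eq_iff)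
  qed
qed

lemma dual_cos_image_angle_range: "{c. \<bar>re c\<bar> < 1} \<union> {1, - 1} \<subseteq> dual_ext cos ` angle_range"
proof -
  have "c \<in> dual_ext cos ` angle_range" if c: "\<bar>re c\<bar> < 1" for c
  proof -
    define a where "a = arccos (re c)"
    have a: "0 < a" "a < pi" "cos a = re c"
      using c arccos_lt_bounded[of "re c"] by (auto simp: a_def)
    then have "sin a > 0"
      by (simp add: sin_gt_zero)
    with a have "dual_ext cos (Dual a (- du c / sin a)) = c"
      by (simp add: dual_eq_iff)
    moreover have "Dual a (- du c / sin a) \<in> angle_range"
      using a by (simp add: angle_range_def)
    ultimately show ?thesis
      by (metis image_eqI)
  qed
  moreover have "dual_ext cos 0 = 1" and "dual_ext cos (Dual pi 0) = - 1"
    by (simp_all add: dual_eq_iff)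
  moreover have "0 \<in> angle_range" and "Dual pi 0 \<in> angle_range"
    by (simp_all add: angle_range_def)
  ultimately show ?thesis
    by (auto intro: rev_image_eqI)
qed

definition dual_arccos :: "dual \<Rightarrow> dual" where
  "dual_arccos c = (THE t. t \<in> angle_range \<and> dual_ext cos t = c)"

lemma dual_arccos:
  assumes "c \<in> dual_ext cos ` angle_range"
  shows "dual_arccos c \<in> angle_range" and "dual_ext cos (dual_arccos c) = c"
proof -
  obtain t where t: "t \<in> angle_range" "dual_ext cos t = c"
    using assms by blast
  have "dual_arccos c = t"
    unfolding dual_arccos_def
  proof (rule the_equality)
    show "t \<in> angle_range \<and> dual_ext cos t = c"
      using t by simp
    show "s = t" if "s \<in> angle_range \<and> dual_ext cos s = c" for s
      using that t inj_on_dual_cos_angle_range by (metis inj_onD)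
  qed
  with t show "dual_arccos c \<in> angle_range" and "dual_ext cos (dual_arccos c) = c"
    by simp_all
qed

locale dual_scalar_product =
  fixes sp :: "dual^3 \<Rightarrow> dual^3 \<Rightarrow> dual"
  assumes is_scalar_product: "is_scalar_product sp"
begin

lemma sp_commute: "sp x y = sp y x"
  using is_scalar_product unfolding is_scalar_product_def by blast

lemma sp_add_left [simp]: "sp (x + y) z = sp x z + sp y z"
  using is_scalar_product unfolding is_scalar_product_def by blast

lemma sp_add_right [simp]: "sp z (x + y) = sp z x + sp z y"
  using sp_add_left sp_commute by metis

lemma sp_scale_left [simp]: "sp (c *s x) y = c * sp x y"
  using is_scalar_product unfolding is_scalar_product_def by blast

lemma sp_scale_right [simp]: "sp y (c *s x) = c * sp y x"
  using sp_scale_left sp_commute by metis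

lemma sp_minus_left [simp]: "sp (- x) y = - sp x y"
  using sp_scale_left[of "- 1" x y] by (simp add: vector_sneg_minus1)

lemma sp_minus_right [simp]: "sp y (- x) = - sp y x"
  using sp_minus_left sp_commute by metis

lemma sp_diff_left [simp]: "sp (x - y) z = sp x z - sp y z"
  using sp_add_left[of x "- y" z] by simp

lemma sp_diff_right [simp]: "sp z (x - y) = sp z x - sp z y"
  using sp_diff_left sp_commute by metis

lemma sp_self_nonneg: "0 \<le> re (sp x x)"
  using is_scalar_product unfolding is_scalar_product_def by blast

lemma sp_self_eq_0_iff: "re (sp x x) = 0 \<longleftrightarrow> x \<in> eps_part"
  using is_scalar_product unfolding is_scalar_product_def by blast

lemma sp_self_pos: "x \<notin> eps_part \<Longrightarrow> 0 < re (sp x x)"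
  using sp_self_nonneg[of x] sp_self_eq_0_iff[of x] by linarith

lemma dnorm_pos: "x \<notin> eps_part \<Longrightarrow> 0 < re (dnorm sp x)"
  using sp_self_pos by (simp add: dnorm_def)

lemma dnorm_mult_self: "x \<notin> eps_part \<Longrightarrow> dnorm sp x * dnorm sp x = sp x x"
  using sp_self_pos dual_sqrt_mult_self by (simp add: dnorm_def)

definition gram :: "dual^3 \<Rightarrow> dual^3 \<Rightarrow> dual" where
  "gram x y = sp x x * sp y y - sp x y * sp x y"

lemma gram_cauchy_schwarz:
  assumes x: "x \<notin> eps_part"
  shows "0 \<le> re (gram x y)" and "re (gram x y) = 0 \<Longrightarrow> gram x y = 0"
proof -
  define p where "p = re (sp x x)"
  have p: "0 < p"
    using sp_self_pos[OF x] by (simp add: p_def)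
  define l where "l = re (sp x y) / p"
  define v where "v = y + Dual (- l) 0 *s x"
  have "re (sp v v) = re (sp y y) - 2 * l * re (sp x y) + l * l * p"
    by (simp add: v_def p_def sp_commute[of y x] algebra_simps)
  also have "\<dots> = re (gram x y) / p"
    using p by (simp add: gram_def l_def p_def field_simps power2_eq_square)
  finally have v: "re (sp v v) = re (gram x y) / p" .
  then show "0 \<le> re (gram x y)"
    using sp_self_nonneg[of v] p by (simp add: zero_le_divide_iff)
  assume "re (gram x y) = 0"
  then have "v \<in> eps_part"
    using v sp_self_eq_0_iff by simp
  then obtain w where "v = eps *s w"
    by (auto simp: eps_part_def)
  then have "y = Dual l 0 *s x + eps *s w"
    by (simp add: v_def algebra_simps vec_eq_iff dual_eq_iff)
  then show "gram x y = 0"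
    by (simp add: gram_def dual_eq_iff eps_def sp_commute[of w x] algebra_simps)
qed

lemma dnorm_mult_dnorm:
  assumes "x \<notin> eps_part" "y \<notin> eps_part"
  shows "0 < re (dnorm sp x * dnorm sp y)"
    and "(dnorm sp x * dnorm sp y) * (dnorm sp x * dnorm sp y) = sp x x * sp y y"
proof -
  show "0 < re (dnorm sp x * dnorm sp y)"
    using dnorm_pos[OF assms(1)] dnorm_pos[OF assms(2)] by simp
  have "(dnorm sp x * dnorm sp y) * (dnorm sp x * dnorm sp y)
      = (dnorm sp x * dnorm sp x) * (dnorm sp y * dnorm sp y)"
    by (simp add: ac_simps)
  then show "(dnorm sp x * dnorm sp y) * (dnorm sp x * dnorm sp y) = sp x x * sp y y"
    using dnorm_mult_self[OF assms(1)] dnorm_mult_self[OF assms(2)] by simp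
qed

lemma normalized_sp_in_cos_image:
  assumes "x \<notin> eps_part" "y \<notin> eps_part"
  shows "sp x y / (dnorm sp x * dnorm sp y) \<in> dual_ext cos ` angle_range"
proof -
  define n where "n = dnorm sp x * dnorm sp y"
  define c where "c = sp x y / n"
  have n: "0 < re n" and nn: "n * n = sp x x * sp y y"
    using dnorm_mult_dnorm[OF assms] by (simp_all add: n_def)
  have cn: "c * n = sp x y"
    using n by (simp add: c_def dual_divide_mult_cancel)
  have gram: "(1 - c * c) * (n * n) = gram x y"
    unfolding gram_def nn[symmetric] cn[symmetric] by (simp add: algebra_simps)
  then have re_gram: "(1 - re c * re c) * (re n * re n) = re (gram x y)"
    by (metis dual_components(3,7,11))
  have "0 \<le> (1 - re c * re c) * (re n * re n)"
    using gram_cauchy_schwarz(1)[OF assms(1), of y] re_gram by simp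
  then have "re c * re c \<le> 1"
    using mult_pos_pos[OF n n] by (auto simp: zero_le_mult_iff)
  then consider "re c * re c < 1" | "re c * re c = 1"
    by linarith
  then have "\<bar>re c\<bar> < 1 \<or> c = 1 \<or> c = - 1"
  proof cases
    case 1
    then show ?thesis
      by (simp add: abs_square_less_1 flip: power2_eq_square)
  next
    case 2
    then have "gram x y = 0"
      using re_gram gram_cauchy_schwarz(2)[OF assms(1)] by simp
    then have "(1 - c * c) * (n * n) = 0 * (n * n)"
      using gram by simp
    then have "c * c = 1"
      using n by (subst (asm) dual_mult_right_cancel) simp_all
    then show ?thesis
      using dual_square_eq_1 by blast
  qed
  then show ?thesis
    using dual_cos_image_angle_range by (auto simp: c_def n_def)
qed

lemma dual_angle_eq_dual_arccos:
  "dual_angle sp x y = dual_arccos (sp x y / (dnorm sp x * dnorm sp y))"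
  by (simp add: dual_angle_def dual_arccos_def)

lemma dual_angle_in_angle_range:
  "x \<notin> eps_part \<Longrightarrow> y \<notin> eps_part \<Longrightarrow> dual_angle sp x y \<in> angle_range"
  using dual_arccos(1)[OF normalized_sp_in_cos_image] by (simp add: dual_angle_eq_dual_arccos)

lemma cos_dual_angle:
  assumes "x \<notin> eps_part" "y \<notin> eps_part"
  shows "dual_ext cos (dual_angle sp x y) * (dnorm sp x * dnorm sp y) = sp x y"
proof -
  have "re (dnorm sp x * dnorm sp y) \<noteq> 0"
    using dnorm_mult_dnorm(1)[OF assms] by linarith
  with dual_arccos(2)[OF normalized_sp_in_cos_image[OF assms]] show ?thesis
    by (simp only: dual_angle_eq_dual_arccos dual_divide_mult_cancel not_False_eq_True)
qed

lemma sin_dual_angle_square: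
  assumes "x \<notin> eps_part" "y \<notin> eps_part"
  defines "s \<equiv> dual_ext sin (dual_angle sp x y) * (dnorm sp x * dnorm sp y)"
  shows "s * s = gram x y"
proof -
  let ?t = "dual_angle sp x y" and ?n = "dnorm sp x * dnorm sp y"
  have "s * s = (dual_ext sin ?t * dual_ext sin ?t + dual_ext cos ?t * dual_ext cos ?t) * (?n * ?n)
      - (dual_ext cos ?t * ?n) * (dual_ext cos ?t * ?n)"
    by (simp add: s_def algebra_simps)
  also have "\<dots> = gram x y"
    using dnorm_mult_dnorm(2)[OF assms(1,2)] cos_dual_angle[OF assms(1,2)]
    by (simp add: dual_sin_cos_squared_add gram_def)
  finally show ?thesis .
qed

lemma sin_dual_angle:
  assumes "x \<notin> eps_part" "y \<notin> eps_part"
  shows "dual_ext sin (dual_angle sp x y) * (dnorm sp x * dnorm sp y) = dual_ext sqrt (gram x y)"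
proof -
  let ?s = "dual_ext sin (dual_angle sp x y) * (dnorm sp x * dnorm sp y)"
  have "0 < re (dual_ext sin (dual_angle sp x y)) \<or> dual_ext sin (dual_angle sp x y) = 0"
    using dual_sin_pos_or_0_angle_range[OF dual_angle_in_angle_range[OF assms]] .
  then have "0 < re ?s \<or> ?s = 0"
    using dnorm_mult_dnorm(1)[OF assms] by (metis dual_components(7) mult_pos_pos mult_zero_left)
  then show ?thesis
    using dual_sqrt_square sin_dual_angle_square[OF assms] by metis
qed

lemma sp_pos_if_re_dual_angle_eq_0:
  assumes "x \<notin> eps_part" "y \<notin> eps_part" "re (dual_angle sp x y) = 0"
  shows "0 < re (sp x y)"
  using arg_cong[OF cos_dual_angle[OF assms(1,2)], of re] dnorm_mult_dnorm(1)[OF assms(1,2)] assms(3)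
  by simp

context
  fixes x y z :: "dual^3"
  assumes triangle: "x + y + z = 0"
begin

lemma sp_triangle:
  "sp y z = - sp x y - sp y y"
  "sp z x = - sp x x - sp x y"
  "sp z z = sp x x + 2 * sp x y + sp y y"
proof -
  have z: "z = - x - y"
    using triangle by (simp add: algebra_simps eq_neg_iff_add_eq_0)
  show "sp y z = - sp x y - sp y y" "sp z x = - sp x x - sp x y"
    "sp z z = sp x x + 2 * sp x y + sp y y"
    unfolding z by (simp_all add: sp_commute[of y x] algebra_simps)
qed

lemma gram_triangle: "gram y z = gram x y" "gram z x = gram x y"
  by (simp_all add: gram_def sp_triangle algebra_simps)

lemma sp_triangle_not_all_pos:
  assumes "x \<notin> eps_part"
  shows "\<not> (0 < re (sp x y) \<and> 0 < re (sp y z) \<and> 0 < re (sp z x))"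
  using sp_self_pos[OF assms] sp_self_nonneg[of y] sp_self_nonneg[of z]
  by (simp add: sp_triangle)

context
  assumes nondeg: "x \<notin> eps_part" "y \<notin> eps_part" "z \<notin> eps_part"
begin

lemma cos_sin_dual_angle_triangle:
  "dual_ext cos (dual_angle sp x y + dual_angle sp y z) = dual_ext cos (dual_angle sp z x)"
  "dual_ext sin (dual_angle sp x y + dual_angle sp y z) = - dual_ext sin (dual_angle sp z x)"
proof -
  define a b c where "a = dual_angle sp x y" and "b = dual_angle sp y z" and "c = dual_angle sp z x"
  define k where "k = dual_ext sqrt (gram x y)"
  define m where "m = (dnorm sp x * dnorm sp y) * (dnorm sp y * dnorm sp z)"
  note cos = cos_dual_angle[OF nondeg(1,2), folded a_def] cos_dual_angle[OF nondeg(2,3), folded b_def]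
    cos_dual_angle[OF nondeg(3,1), folded c_def]
  note sin = sin_dual_angle[OF nondeg(1,2), folded a_def k_def]
    sin_dual_angle[OF nondeg(2,3), folded b_def, unfolded gram_triangle, folded k_def]
    sin_dual_angle[OF nondeg(3,1), folded c_def, unfolded gram_triangle, folded k_def]
  have kk: "k * k = gram x y"
    using sin_dual_angle_square[OF nondeg(1,2), folded a_def] sin(1) by simp
  have yy: "dnorm sp y * dnorm sp y = sp y y"
    using dnorm_mult_self[OF nondeg(2)] .
  have m: "re m \<noteq> 0"
    using dnorm_pos[OF nondeg(1)] dnorm_pos[OF nondeg(2)] dnorm_pos[OF nondeg(3)]
    by (simp add: m_def)
  have "dual_ext cos (a + b) * m
      = (dual_ext cos a * (dnorm sp x * dnorm sp y)) * (dual_ext cos b * (dnorm sp y * dnorm sp z))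
      - (dual_ext sin a * (dnorm sp x * dnorm sp y)) * (dual_ext sin b * (dnorm sp y * dnorm sp z))"
    by (simp add: dual_cos_add m_def algebra_simps)
  also have "\<dots> = sp x y * sp y z - gram x y"
    using cos sin kk by simp
  also have "\<dots> = sp z x * sp y y"
    by (simp add: gram_def sp_triangle algebra_simps)
  also have "\<dots> = dual_ext cos c * m"
    by (simp add: m_def flip: cos(3) yy)
  finally show "dual_ext cos (a + b) = dual_ext cos c"
    using m by (simp add: dual_mult_right_cancel)
  have "dual_ext sin (a + b) * m
      = (dual_ext sin a * (dnorm sp x * dnorm sp y)) * (dual_ext cos b * (dnorm sp y * dnorm sp z))
      + (dual_ext cos a * (dnorm sp x * dnorm sp y)) * (dual_ext sin b * (dnorm sp y * dnorm sp z))"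
    by (simp add: dual_sin_add m_def algebra_simps)
  also have "\<dots> = k * (sp x y + sp y z)"
    using cos sin by (simp add: algebra_simps)
  also have "\<dots> = - (k * sp y y)"
    by (simp add: sp_triangle)
  also have "\<dots> = (- dual_ext sin c) * m"
    by (simp add: m_def flip: sin(3) yy)
  finally show "dual_ext sin (a + b) = - dual_ext sin c"
    using m dual_mult_right_cancel by blast
qed

lemma dual_angle_triangle_sum:
  "dual_angle sp x y + dual_angle sp y z + dual_angle sp z x = Dual (2 * pi) 0"
proof -
  define a b c where "a = dual_angle sp x y" and "b = dual_angle sp y z" and "c = dual_angle sp z x"
  note addition = cos_sin_dual_angle_triangle[folded a_def b_def c_def]
  have "dual_ext cos (a + b + c)
      = dual_ext sin c * dual_ext sin c + dual_ext cos c * dual_ext cos c"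
    by (simp add: dual_cos_add[of "a + b"] addition)
  then have "dual_ext cos (a + b + c) = 1"
    by (simp only: dual_sin_cos_squared_add)
  moreover have "dual_ext sin (a + b + c) = 0"
    by (simp add: dual_sin_add[of "a + b"] addition)
  moreover have "0 \<le> re a" "re a \<le> pi" "0 \<le> re b" "re b \<le> pi" "0 \<le> re c" "re c \<le> pi"
    using angle_range_re_bounds dual_angle_in_angle_range nondeg by (auto simp: a_def b_def c_def)
  moreover have "\<not> (re a = 0 \<and> re b = 0 \<and> re c = 0)"
    using sp_triangle_not_all_pos[OF nondeg(1)] sp_pos_if_re_dual_angle_eq_0 nondeg
    by (auto simp: a_def b_def c_def)
  ultimately show ?thesis
    unfolding a_def b_def c_def by (intro dual_eq_2pi_if_cos_sin) auto
qed

end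

end

end

theorem proposition20:
  fixes sp :: "dual^3 \<Rightarrow> dual^3 \<Rightarrow> dual" and x y z :: "dual^3"
  assumes "is_scalar_product sp"
    and "x \<notin> eps_part" and "y \<notin> eps_part" and "z \<notin> eps_part"
    and "x + y + z = 0"
  shows "alpha sp x y + alpha sp y z + alpha sp z x = Dual pi 0"
proof -
  interpret dual_scalar_product sp
    by (rule dual_scalar_product.intro) (fact assms(1))
  have "dual_angle sp x y + dual_angle sp y z + dual_angle sp z x = Dual (2 * pi) 0"
    using dual_angle_triangle_sum[OF assms(5,2-4)] .
  then show ?thesis
    by (simp add: alpha_def dual_eq_iff)
qed

end
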